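(* Let $T$ be a light tournament and $z\in V(T)$. Then $V_3(z)$ is 2-in-dominated by $V_2(z)$: there is a set $Z'\subseteq V_2(z)$ with $|Z'|\le 2$ such that every $s\in V_3(z)$ has an arc $(s,z')\in A(T)$ for some $z'\in Z'$.
   Context: A triangle of a tournament is a set of three vertices inducing a directed 3-cycle. An unordered pair $ab$ of vertices is a diagonal if there exist vertices $u,v$ with $\{u,v,a\}$ and $\{u,v,b\}$ both triangles. A triangle is heavy if at least two of its pairs are diagonals; a tournament is light if it has no heavy triangle. For $S\subseteq V(T)$, $N(S)=\{v\notin S: (v,u)\in A(T)\text{ for some }u\in S\}$. For $z\in V(T)$: $V_1(z)=\{z\}$ and $V_{j+1}(z)=N\big(\bigcup_{k\le j}V_k(z)\big)$ for $j\ge1$. *)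

theory Defs
  imports Main
begin

definition tournament :: "'a set \<Rightarrow> 'a rel \<Rightarrow> bool" where
  "tournament Vs A \<longleftrightarrow> finite Vs \<and> A \<subseteq> Vs \<times> Vs \<and>
     (\<forall>v. (v, v) \<notin> A) \<and>
     (\<forall>u\<in>Vs. \<forall>v\<in>Vs. u \<noteq> v \<longrightarrow> ((u, v) \<in> A \<longleftrightarrow> (v, u) \<notin> A))"

definition triangle :: "'a set \<Rightarrow> 'a rel \<Rightarrow> 'a set \<Rightarrow> bool" where
  "triangle Vs A X \<longleftrightarrow> (\<exists>a b c. X = {a, b, c} \<and> a \<in> Vs \<and> b \<in> Vs \<and> c \<in> Vs \<and>
     a \<noteq> b \<and> b \<noteq> c \<and> a \<noteq> c \<and> (a, b) \<in> A \<and> (b, c) \<in> A \<and> (c, a) \<in> A)"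

definition diagonal :: "'a set \<Rightarrow> 'a rel \<Rightarrow> 'a \<Rightarrow> 'a \<Rightarrow> bool" where
  "diagonal Vs A a b \<longleftrightarrow> a \<noteq> b \<and>
     (\<exists>u v. triangle Vs A {u, v, a} \<and> triangle Vs A {u, v, b})"

definition heavy :: "'a set \<Rightarrow> 'a rel \<Rightarrow> 'a set \<Rightarrow> bool" where
  "heavy Vs A X \<longleftrightarrow> triangle Vs A X \<and>
     (\<exists>a b c. X = {a, b, c} \<and> a \<noteq> b \<and> b \<noteq> c \<and> a \<noteq> c \<and>
        diagonal Vs A a b \<and> diagonal Vs A a c)"

definition light :: "'a set \<Rightarrow> 'a rel \<Rightarrow> bool" where
  "light Vs A \<longleftrightarrow> tournament Vs A \<and> \<not> (\<exists>X. heavy Vs A X)"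

definition Nb :: "'a set \<Rightarrow> 'a rel \<Rightarrow> 'a set \<Rightarrow> 'a set" where
  "Nb Vs A S = {v \<in> Vs. v \<notin> S \<and> (\<exists>u\<in>S. (v, u) \<in> A)}"

text \<open>upto_lev Vs A z j = V_1(z) \<union> ... \<union> V_(j+1)(z).\<close>
primrec upto_lev :: "'a set \<Rightarrow> 'a rel \<Rightarrow> 'a \<Rightarrow> nat \<Rightarrow> 'a set" where
  "upto_lev Vs A z 0 = {z}"
| "upto_lev Vs A z (Suc j) = upto_lev Vs A z j \<union> Nb Vs A (upto_lev Vs A z j)"

text \<open>Level sets V_j(z), indexed from 1 (level 0 is unused and empty).\<close>
fun level :: "'a set \<Rightarrow> 'a rel \<Rightarrow> 'a \<Rightarrow> nat \<Rightarrow> 'a set" where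
  "level Vs A z 0 = {}"
| "level Vs A z (Suc 0) = {z}"
| "level Vs A z (Suc (Suc j)) = Nb Vs A (upto_lev Vs A z j)"

end

theory Submission
  imports Defs
begin

text \<open>
  Here V_2 is the in-neighbourhood of z and V_3 consists of out-neighbours of z with an arc
  into V_2. Call v \<in> V_2 strong if every s \<in> V_3 that v beats has all its V_2-out-neighbours
  among those of v. Lightness forces a rigid structure: if s \<in> V_3 beats a vertex w \<in> V_3 whose
  V_2-out-neighbourhood is not contained in that of s, then every V_2-out-neighbour v of s is
  strong, because otherwise z s and z v would both be diagonals of the triangle {z, s, v}.
  Consequently the V_3-in-neighbourhoods of strong vertices form a chain, so one strong vertex
  absorbs all arcs from V_3 into strong vertices; and on the vertices of V_3 sending no arc to a
  strong vertex the V_2-out-neighbourhoods form a chain, so a single member of the smallest one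
  absorbs the rest.
\<close>

lemma finite_chain_has_greatest:
  assumes "finite S" "S \<noteq> {}" "\<forall>x\<in>S. \<forall>y\<in>S. C x \<subseteq> C y \<or> C y \<subseteq> C x"
  shows "\<exists>m\<in>S. \<forall>x\<in>S. C x \<subseteq> C m"
proof -
  have "\<Union>(C ` S) \<in> C ` S"
    using assms by (intro Union_in_chain) (auto simp: subset.chain_def)
  then show ?thesis by blast
qed

lemma finite_chain_has_least:
  assumes "finite S" "S \<noteq> {}" "\<forall>x\<in>S. \<forall>y\<in>S. C x \<subseteq> C y \<or> C y \<subseteq> C x"
  shows "\<exists>m\<in>S. \<forall>x\<in>S. C m \<subseteq> C x"
proof -
  have "\<Inter>(C ` S) \<in> C ` S"
    using assms by (intro Inter_in_chain) (auto simp: subset.chain_def)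
  then show ?thesis by blast
qed

lemma level_2_eq: "level Vs A z 2 = {v \<in> Vs. v \<noteq> z \<and> (v, z) \<in> A}"
  by (auto simp: numeral_2_eq_2 Nb_def)

lemma level_3_eq:
  "level Vs A z 3 = Nb Vs A ({z} \<union> level Vs A z 2)"
  by (simp add: numeral_3_eq_3 numeral_2_eq_2)

lemma tournament_flip:
  assumes "tournament Vs A" "u \<in> Vs" "v \<in> Vs" "u \<noteq> v" "(u, v) \<notin> A"
  shows "(v, u) \<in> A"
  using assms unfolding tournament_def by blast

lemma tournament_asym:
  assumes "tournament Vs A" "(u, v) \<in> A"
  shows "(v, u) \<notin> A"
proof -
  have "u \<in> Vs" "v \<in> Vs" "u \<noteq> v"
    using assms unfolding tournament_def by auto
  then show ?thesis using assms unfolding tournament_def by blast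
qed

lemma triangleI:
  assumes "tournament Vs A" "a \<in> Vs" "b \<in> Vs" "c \<in> Vs"
    "(a, b) \<in> A" "(b, c) \<in> A" "(c, a) \<in> A"
  shows "triangle Vs A {a, b, c}"
proof -
  have "a \<noteq> c" "a \<noteq> b" "b \<noteq> c"
    using assms(1,5,6,7) tournament_asym unfolding tournament_def by blast+
  then show ?thesis unfolding triangle_def using assms by blast
qed

locale rooted_light_tournament =
  fixes Vs :: "'a set" and A :: "'a rel" and z :: 'a
  assumes light: "light Vs A" and root: "z \<in> Vs"
begin

abbreviation "V2 \<equiv> level Vs A z 2"
abbreviation "V3 \<equiv> level Vs A z 3"

definition out_V2 :: "'a \<Rightarrow> 'a set" where
  "out_V2 x = {u \<in> V2. (x, u) \<in> A}"

definition in_V3 :: "'a \<Rightarrow> 'a set" where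
  "in_V3 v = {w \<in> V3. (w, v) \<in> A}"

definition strong :: "'a \<Rightarrow> bool" where
  "strong v \<longleftrightarrow> v \<in> V2 \<and> (\<forall>w\<in>V3. (w, v) \<notin> A \<longrightarrow> out_V2 w \<subseteq> out_V2 v)"

lemma tournament: "tournament Vs A"
  using light unfolding light_def by blast

lemma no_heavy: "\<not> heavy Vs A X"
  using light unfolding light_def by blast

lemma finite_V2: "finite V2"
  using tournament unfolding level_2_eq tournament_def by auto

lemma finite_V3: "finite V3"
  using tournament unfolding level_3_eq Nb_def tournament_def by auto

lemma V2D:
  assumes "v \<in> V2"
  shows "v \<in> Vs" "v \<noteq> z" "(v, z) \<in> A"
  using assms unfolding level_2_eq by auto

lemma V3D:
  assumes "s \<in> V3"
  shows "s \<in> Vs" "s \<noteq> z" "(z, s) \<in> A" "s \<notin> V2" "out_V2 s \<noteq> {}"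
proof -
  show s: "s \<in> Vs" "s \<noteq> z" "s \<notin> V2"
    using assms unfolding level_3_eq Nb_def by auto
  then have "(s, z) \<notin> A"
    unfolding level_2_eq by auto
  then show "(z, s) \<in> A"
    using tournament_flip[OF tournament s(1) root s(2)] by blast
  with \<open>(s, z) \<notin> A\<close> show "out_V2 s \<noteq> {}"
    using assms unfolding level_3_eq Nb_def out_V2_def by auto
qed

lemma diagonal_root:
  assumes "w \<in> V3" "u \<in> out_V2 w" "x \<in> Vs" "x \<noteq> z" "(x, w) \<in> A" "(u, x) \<in> A"
  shows "diagonal Vs A z x"
proof -
  have u: "u \<in> Vs" "(w, u) \<in> A" "(u, z) \<in> A"
    using assms(2) V2D unfolding out_V2_def by auto
  have "triangle Vs A {u, w, z}"
    using triangleI[OF tournament root V3D(1)[OF assms(1)] u(1) V3D(3)[OF assms(1)] u(2,3)]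
    by (simp add: insert_commute)
  moreover have "triangle Vs A {u, w, x}"
    using triangleI[OF tournament assms(3) V3D(1)[OF assms(1)] u(1) assms(5) u(2) assms(6)]
    by (simp add: insert_commute)
  ultimately show ?thesis
    unfolding diagonal_def using assms(4) by blast
qed

lemma strongI:
  assumes s: "s \<in> V3" "v \<in> out_V2 s"
    and w: "w \<in> V3" "(s, w) \<in> A" "\<not> out_V2 w \<subseteq> out_V2 s"
  shows "strong v"
proof (rule ccontr)
  assume "\<not> strong v"
  then obtain w' u' where w': "w' \<in> V3" "(w', v) \<notin> A" "u' \<in> out_V2 w'" "u' \<notin> out_V2 v"
    using s(2) unfolding strong_def out_V2_def by blast
  have v: "v \<in> V2" "(s, v) \<in> A" using s(2) unfolding out_V2_def by auto
  have u': "u' \<in> V2" "(w', u') \<in> A" "(v, u') \<notin> A"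
    using w'(3,4) v(1) unfolding out_V2_def by auto
  have "(v, w') \<in> A"
    using tournament_flip[OF tournament V3D(1)[OF w'(1)] V2D(1)[OF v(1)]] w'(1,2) v(1) V3D(4)
    by blast
  moreover have "(u', v) \<in> A"
    using tournament_flip[OF tournament V2D(1)[OF v(1)] V2D(1)[OF u'(1)]] w'(2) u'(2,3) by blast
  ultimately have diag_v: "diagonal Vs A z v"
    using diagonal_root[OF w'(1,3) V2D(1,2)[OF v(1)]] by blast
  obtain u where u: "u \<in> out_V2 w" "u \<notin> out_V2 s" using w(3) by blast
  then have "u \<in> V2" "(s, u) \<notin> A" unfolding out_V2_def by auto
  then have "(u, s) \<in> A"
    using tournament_flip[OF tournament V3D(1)[OF s(1)] V2D(1)] V3D(4)[OF s(1)] by blast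
  then have diag_s: "diagonal Vs A z s"
    using diagonal_root[OF w(1) u(1) V3D(1,2)[OF s(1)] w(2)] by blast
  have "triangle Vs A {z, s, v}"
    using triangleI[OF tournament root V3D(1)[OF s(1)] V2D(1)[OF v(1)] V3D(3)[OF s(1)] v(2)
        V2D(3)[OF v(1)]] .
  moreover have "s \<noteq> v" using s(1) v(1) V3D(4) by blast
  ultimately have "heavy Vs A {z, s, v}"
    unfolding heavy_def using diag_s diag_v V3D(2)[OF s(1)] V2D(2)[OF v(1)] by blast
  then show False using no_heavy by blast
qed

lemma strong_in_V3_chain:
  assumes "strong v" "strong v'"
  shows "in_V3 v \<subseteq> in_V3 v' \<or> in_V3 v' \<subseteq> in_V3 v"
proof (rule ccontr)
  assume "\<not> ?thesis"
  then obtain s w where s: "s \<in> V3" "(s, v) \<in> A" "(s, v') \<notin> A"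
    and w: "w \<in> V3" "(w, v') \<in> A" "(w, v) \<notin> A"
    unfolding in_V3_def by blast
  have V2: "v \<in> V2" "v' \<in> V2" using assms unfolding strong_def by blast+
  have "v' \<in> out_V2 v" using assms(1) w V2 unfolding strong_def out_V2_def by blast
  moreover have "v \<in> out_V2 v'" using assms(2) s V2 unfolding strong_def out_V2_def by blast
  ultimately show False
    using tournament_asym[OF tournament] unfolding out_V2_def by blast
qed

lemma strong_targets_dominated:
  "\<exists>Z \<subseteq> V2. card Z \<le> 1 \<and> (\<forall>s\<in>V3. (\<exists>v. strong v \<and> (s, v) \<in> A) \<longrightarrow> (\<exists>z'\<in>Z. (s, z') \<in> A))"
proof (cases "Collect strong = {}")
  case True
  then show ?thesis by (intro exI[of _ "{}"]) auto
next
  case False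
  have "finite (Collect strong)"
    using finite_V2 by (rule rev_finite_subset) (auto simp: strong_def)
  then obtain m where "strong m" "\<forall>v. strong v \<longrightarrow> in_V3 v \<subseteq> in_V3 m"
    using finite_chain_has_greatest[of "Collect strong" in_V3] False strong_in_V3_chain by auto
  then show ?thesis
    unfolding strong_def in_V3_def by (intro exI[of _ "{m}"]) auto
qed

definition weak_V3 :: "'a set" where
  "weak_V3 = {s \<in> V3. \<forall>v. strong v \<longrightarrow> (s, v) \<notin> A}"

lemma weak_V3_out_V2_mono:
  assumes "s \<in> weak_V3" "w \<in> V3" "(s, w) \<in> A"
  shows "out_V2 w \<subseteq> out_V2 s"
proof (rule ccontr)
  assume not_mono: "\<not> ?thesis"
  obtain v where "v \<in> out_V2 s"
    using assms(1) V3D(5) unfolding weak_V3_def by blast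
  then have "strong v"
    using strongI assms not_mono unfolding weak_V3_def by blast
  with \<open>v \<in> out_V2 s\<close> show False
    using assms(1) unfolding weak_V3_def out_V2_def by blast
qed

lemma weak_V3_out_V2_chain:
  assumes "s \<in> weak_V3" "s' \<in> weak_V3"
  shows "out_V2 s \<subseteq> out_V2 s' \<or> out_V2 s' \<subseteq> out_V2 s"
proof (cases "s = s'")
  case False
  have "s \<in> V3" "s' \<in> V3" using assms unfolding weak_V3_def by blast+
  then have "(s, s') \<in> A \<or> (s', s) \<in> A"
    using False V3D(1) tournament_flip[OF tournament] by blast
  then show ?thesis
    using weak_V3_out_V2_mono assms \<open>s \<in> V3\<close> \<open>s' \<in> V3\<close> by blast
qed simp

lemma weak_V3_dominated:
  "\<exists>Z \<subseteq> V2. card Z \<le> 1 \<and> (\<forall>s\<in>weak_V3. \<exists>z'\<in>Z. (s, z') \<in> A)"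
proof (cases "weak_V3 = {}")
  case True
  then show ?thesis by (intro exI[of _ "{}"]) auto
next
  case False
  have "finite weak_V3"
    using finite_V3 by (rule rev_finite_subset) (auto simp: weak_V3_def)
  then obtain m where m: "m \<in> weak_V3" "\<forall>s\<in>weak_V3. out_V2 m \<subseteq> out_V2 s"
    using finite_chain_has_least[of weak_V3 out_V2] False weak_V3_out_V2_chain by auto
  then obtain u where "u \<in> out_V2 m"
    using V3D(5) unfolding weak_V3_def by blast
  with m show ?thesis
    unfolding out_V2_def by (intro exI[of _ "{u}"]) auto
qed

end

theorem lemma5:
  assumes "light Vs A" and "z \<in> Vs"
  shows "\<exists>Z'. Z' \<subseteq> level Vs A z 2 \<and> card Z' \<le> 2 \<and>
           (\<forall>s\<in>level Vs A z 3. \<exists>z'\<in>Z'. (s, z') \<in> A)"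
proof -
  interpret rooted_light_tournament Vs A z
    using assms by unfold_locales
  obtain Z1 where Z1: "Z1 \<subseteq> level Vs A z 2" "card Z1 \<le> 1"
    "\<forall>s\<in>level Vs A z 3. (\<exists>v. strong v \<and> (s, v) \<in> A) \<longrightarrow> (\<exists>z'\<in>Z1. (s, z') \<in> A)"
    using strong_targets_dominated by blast
  obtain Z2 where Z2: "Z2 \<subseteq> level Vs A z 2" "card Z2 \<le> 1" "\<forall>s\<in>weak_V3. \<exists>z'\<in>Z2. (s, z') \<in> A"
    using weak_V3_dominated by blast
  have "card (Z1 \<union> Z2) \<le> 2"
    using card_Un_le[of Z1 Z2] Z1(2) Z2(2) by linarith
  moreover have "\<forall>s\<in>level Vs A z 3. \<exists>z'\<in>Z1 \<union> Z2. (s, z') \<in> A"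
    using Z1(3) Z2(3) unfolding weak_V3_def by blast
  ultimately show ?thesis
    using Z1(1) Z2(1) by (intro exI[of _ "Z1 \<union> Z2"]) simp
qed

end
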